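(* Every cactus graph of girth at least $4$ is $(2,1)$-colorable.
   Context: A cactus graph is a graph in which every $2$-connected component (block) is either a cycle or a single edge $K_2$. The girth is the length of a shortest cycle (infinite if acyclic). A set of vertices $X$ is $2$-independent if any two distinct vertices of $X$ are at distance at least $3$. A graph is $(a,b)$-colorable if its vertex set can be partitioned into $a$ independent sets and $b$ $2$-independent sets (some parts may be empty). *)

theory Defs
  imports Main
begin

definition simple_graph :: "'a set \<Rightarrow> ('a \<Rightarrow> 'a \<Rightarrow> bool) \<Rightarrow> bool" where
  "simple_graph V E \<longleftrightarrow> finite V \<and>
     (\<forall>u v. E u v \<longrightarrow> u \<in> V \<and> v \<in> V) \<and>
     (\<forall>u v. E u v \<longrightarrow> E v u) \<and> (\<forall>v. \<not> E v v)"

text \<open>A walk is a nonempty vertex list with consecutive vertices adjacent;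
its length (number of edges) is length xs - 1.\<close>

definition walk :: "('a \<Rightarrow> 'a \<Rightarrow> bool) \<Rightarrow> 'a list \<Rightarrow> bool" where
  "walk E xs \<longleftrightarrow> xs \<noteq> [] \<and> (\<forall>i. Suc i < length xs \<longrightarrow> E (xs ! i) (xs ! Suc i))"

definition connected_on :: "('a \<Rightarrow> 'a \<Rightarrow> bool) \<Rightarrow> 'a set \<Rightarrow> bool" where
  "connected_on E S \<longleftrightarrow> (\<forall>u\<in>S. \<forall>v\<in>S. \<exists>xs. walk E xs \<and> hd xs = u \<and> last xs = v \<and> set xs \<subseteq> S)"

text \<open>S spans a connected induced subgraph with at least two vertices and no cut vertex
(this covers 2-connected subgraphs and single edges K2).\<close>

definition nonsep_set :: "('a \<Rightarrow> 'a \<Rightarrow> bool) \<Rightarrow> 'a set \<Rightarrow> bool" where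
  "nonsep_set E S \<longleftrightarrow> finite S \<and> 2 \<le> card S \<and> connected_on E S \<and> (\<forall>v\<in>S. connected_on E (S - {v}))"

definition is_block :: "'a set \<Rightarrow> ('a \<Rightarrow> 'a \<Rightarrow> bool) \<Rightarrow> 'a set \<Rightarrow> bool" where
  "is_block V E B \<longleftrightarrow> B \<subseteq> V \<and> nonsep_set E B \<and> (\<forall>B'. B \<subset> B' \<and> B' \<subseteq> V \<longrightarrow> \<not> nonsep_set E B')"

definition is_cycle_graph_on :: "('a \<Rightarrow> 'a \<Rightarrow> bool) \<Rightarrow> 'a set \<Rightarrow> bool" where
  "is_cycle_graph_on E B \<longleftrightarrow> finite B \<and> 3 \<le> card B \<and> connected_on E B \<and>
     (\<forall>v\<in>B. card {u\<in>B. E v u} = 2)"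

definition is_K2_on :: "('a \<Rightarrow> 'a \<Rightarrow> bool) \<Rightarrow> 'a set \<Rightarrow> bool" where
  "is_K2_on E B \<longleftrightarrow> card B = 2 \<and> connected_on E B"

definition cactus :: "'a set \<Rightarrow> ('a \<Rightarrow> 'a \<Rightarrow> bool) \<Rightarrow> bool" where
  "cactus V E \<longleftrightarrow> simple_graph V E \<and>
     (\<forall>B. is_block V E B \<longrightarrow> is_cycle_graph_on E B \<or> is_K2_on E B)"

definition has_cycle_of_length :: "('a \<Rightarrow> 'a \<Rightarrow> bool) \<Rightarrow> nat \<Rightarrow> bool" where
  "has_cycle_of_length E k \<longleftrightarrow> (\<exists>xs. length xs = k \<and> 3 \<le> k \<and> distinct xs \<and> walk E xs \<and> E (last xs) (hd xs))"

text \<open>girth at least g (girth = length of a shortest cycle, infinite if acyclic).\<close>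

definition girth_at_least :: "('a \<Rightarrow> 'a \<Rightarrow> bool) \<Rightarrow> nat \<Rightarrow> bool" where
  "girth_at_least E g \<longleftrightarrow> (\<forall>k. has_cycle_of_length E k \<longrightarrow> g \<le> k)"

definition dist_le :: "('a \<Rightarrow> 'a \<Rightarrow> bool) \<Rightarrow> nat \<Rightarrow> 'a \<Rightarrow> 'a \<Rightarrow> bool" where
  "dist_le E d u v \<longleftrightarrow> (\<exists>xs. walk E xs \<and> hd xs = u \<and> last xs = v \<and> length xs \<le> Suc d)"

definition independent_set :: "('a \<Rightarrow> 'a \<Rightarrow> bool) \<Rightarrow> 'a set \<Rightarrow> bool" where
  "independent_set E X \<longleftrightarrow> (\<forall>x\<in>X. \<forall>y\<in>X. \<not> E x y)"

definition two_independent_set :: "('a \<Rightarrow> 'a \<Rightarrow> bool) \<Rightarrow> 'a set \<Rightarrow> bool" where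
  "two_independent_set E X \<longleftrightarrow> (\<forall>x\<in>X. \<forall>y\<in>X. x \<noteq> y \<longrightarrow> \<not> dist_le E 2 x y)"

text \<open>(a,b)-colorable: V partitioned into a independent sets (colours 0..a-1) and
b 2-independent sets (colours a..a+b-1); parts may be empty.\<close>

definition ab_colorable :: "'a set \<Rightarrow> ('a \<Rightarrow> 'a \<Rightarrow> bool) \<Rightarrow> nat \<Rightarrow> nat \<Rightarrow> bool" where
  "ab_colorable V E a b \<longleftrightarrow> (\<exists>c :: 'a \<Rightarrow> nat.
     (\<forall>v\<in>V. c v < a + b) \<and>
     (\<forall>i<a. independent_set E {v\<in>V. c v = i}) \<and>
     (\<forall>i. a \<le> i \<and> i < a + b \<longrightarrow> two_independent_set E {v\<in>V. c v = i}))"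

end

theory Submission
  imports Defs
begin

text \<open>
  The induction runs over a property of cacti that, unlike the block condition, survives vertex
  deletion: every nonseparable vertex set induces a subgraph of maximum degree at most 2. It holds
  in a cactus because each such set lies in a block, and it rules out two cycles sharing two
  vertices such that some vertex of their union has three neighbors in it.

  Colors 0 and 1 form the independent classes and color 2 the 2-independent one. A vertex of
  degree at most 1 is deleted and gets the color 0 or 1 not used by its neighbor. Otherwise the
  minimum degree is 2. Let x1 x2 x3 b ... be a longest path; all neighbors of x1 lie on it, and
  the last of them, a, closes a cycle C. Then x1, x2, x3 have degree 2: a further neighbor would
  close a second cycle sharing two vertices with C, giving a vertex of degree 3 in their union,
  or, as the girth is at least 4, would extend the path. The path x1 x2 x3 is deleted and colored
  (c b, 2, c a) when c a and c b are distinct colors below 2, and (g, 1 - g, g) for a color g < 2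
  different from c a and c b otherwise.
\<close>

section \<open>Walks and connectivity\<close>

lemma walk_Nil [simp]: "\<not> walk E []"
  by (simp add: walk_def)

lemma walk_single [simp]: "walk E [x]"
  by (simp add: walk_def)

lemma walk_Cons_Cons [simp]: "walk E (x # y # xs) \<longleftrightarrow> E x y \<and> walk E (y # xs)"
  unfolding walk_def by (auto simp: All_less_Suc2 nth_Cons split: nat.splits)

lemma walk_Cons: "walk E (x # xs) \<longleftrightarrow> xs = [] \<or> E x (hd xs) \<and> walk E xs"
  by (cases xs) auto

lemma walk_append:
  "xs \<noteq> [] \<Longrightarrow> ys \<noteq> [] \<Longrightarrow> walk E (xs @ ys) \<longleftrightarrow> walk E xs \<and> walk E ys \<and> E (last xs) (hd ys)"
  by (induction xs) (auto simp: walk_Cons)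

lemma walk_join:
  assumes "walk E xs" "walk E ys" "last xs = hd ys"
  shows "walk E (xs @ tl ys)" "last (xs @ tl ys) = last ys" "set (xs @ tl ys) = set xs \<union> set ys"
proof -
  obtain y ys' where ys: "ys = y # ys'" using assms(2) by (cases ys) auto
  have "xs \<noteq> []" using assms(1) by auto
  then show "walk E (xs @ tl ys)" "last (xs @ tl ys) = last ys"
    using assms by (cases ys'; auto simp: ys walk_append walk_Cons)+
  show "set (xs @ tl ys) = set xs \<union> set ys"
    using assms \<open>xs \<noteq> []\<close> by (auto simp: ys)
qed

lemma walk_mono: "walk E xs \<Longrightarrow> (\<And>x y. E x y \<Longrightarrow> E' x y) \<Longrightarrow> walk E' xs"
  unfolding walk_def by blast

lemma walk_nth: "walk E xs \<Longrightarrow> Suc i < length xs \<Longrightarrow> E (xs ! i) (xs ! Suc i)"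
  unfolding walk_def by blast

lemma walk_take: "walk E xs \<Longrightarrow> 0 < n \<Longrightarrow> walk E (take n xs)"
  unfolding walk_def by simp

lemma walk_drop: "walk E xs \<Longrightarrow> n < length xs \<Longrightarrow> walk E (drop n xs)"
  unfolding walk_def by (simp add: add.commute)

lemma walk_rev: "symp E \<Longrightarrow> walk E (rev xs) \<longleftrightarrow> walk E xs"
proof (induction xs)
  case (Cons x xs)
  show ?case
  proof (cases "xs = []")
    case False
    then show ?thesis using Cons by (auto simp: walk_append walk_Cons last_rev dest: sympD)
  qed simp
qed simp

lemma connected_on_singleton: "connected_on E {x}"
  unfolding connected_on_def by (auto intro!: exI[of _ "[x]"])

lemma connected_on_edge:
  assumes "symp E" "E x y"
  shows "connected_on E {x, y}"
  unfolding connected_on_def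
proof (intro ballI)
  fix u v assume "u \<in> {x, y}" "v \<in> {x, y}"
  with assms show "\<exists>xs. walk E xs \<and> hd xs = u \<and> last xs = v \<and> set xs \<subseteq> {x, y}"
    by (intro exI[of _ "if u = v then [u] else [u, v]"]) (auto dest: sympD)
qed

lemma connected_on_Un:
  assumes X: "connected_on E X" and Y: "connected_on E Y" and w: "w \<in> X" "w \<in> Y"
  shows "connected_on E (X \<union> Y)"
  unfolding connected_on_def
proof (intro ballI)
  fix u v assume u: "u \<in> X \<union> Y" and v: "v \<in> X \<union> Y"
  obtain xs where xs: "walk E xs" "hd xs = u" "last xs = w" "set xs \<subseteq> X \<union> Y"
    using u X Y w unfolding connected_on_def by blast
  obtain ys where ys: "walk E ys" "hd ys = w" "last ys = v" "set ys \<subseteq> X \<union> Y"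
    using v X Y w unfolding connected_on_def by blast
  have "xs \<noteq> []" using xs by auto
  then show "\<exists>zs. walk E zs \<and> hd zs = u \<and> last zs = v \<and> set zs \<subseteq> X \<union> Y"
    using xs ys walk_join[of E xs ys] by (intro exI[of _ "xs @ tl ys"]) auto
qed

lemma connected_on_walk: "symp E \<Longrightarrow> walk E xs \<Longrightarrow> connected_on E (set xs)"
proof (induction xs rule: induct_list012)
  case (3 x y xs)
  then have "connected_on E ({x, y} \<union> set (y # xs))"
    by (intro connected_on_Un[where w = y] connected_on_edge) auto
  moreover have "{x, y} \<union> set (y # xs) = set (x # y # xs)" by auto
  ultimately show ?case by simp
qed (auto simp: connected_on_singleton)

lemma connected_on_mono: "connected_on E' S \<Longrightarrow> (\<And>x y. E' x y \<Longrightarrow> E x y) \<Longrightarrow> connected_on E S"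
  unfolding connected_on_def using walk_mono by metis

section \<open>Cycles and nonseparable sets\<close>

definition is_cycle :: "('a \<Rightarrow> 'a \<Rightarrow> bool) \<Rightarrow> 'a list \<Rightarrow> bool" where
  "is_cycle E xs \<longleftrightarrow> 3 \<le> length xs \<and> distinct xs \<and> walk E xs \<and> E (last xs) (hd xs)"

lemma girth_le_cycle_length: "girth_at_least E g \<Longrightarrow> is_cycle E xs \<Longrightarrow> g \<le> length xs"
  unfolding girth_at_least_def has_cycle_of_length_def is_cycle_def by blast

lemma girth_4_no_triangle: "girth_at_least E 4 \<Longrightarrow> E a b \<Longrightarrow> E b c \<Longrightarrow> E c a \<Longrightarrow> distinct [a, b, c] \<Longrightarrow> False"
  using girth_le_cycle_length[of E 4 "[a, b, c]"] by (simp add: is_cycle_def)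

lemma connected_on_cycle_minus:
  assumes "symp E" and C: "is_cycle E xs"
  shows "connected_on E (set xs - {v})"
proof (cases "v \<in> set xs")
  case False
  then show ?thesis using C connected_on_walk[OF \<open>symp E\<close>] by (simp add: is_cycle_def)
next
  case True
  then obtain ps qs where xs: "xs = ps @ v # qs" by (meson split_list)
  have "set xs - {v} = set (qs @ ps)" using C by (auto simp: xs is_cycle_def)
  moreover have "walk E (qs @ ps)"
  proof -
    have "qs @ ps \<noteq> []" using C by (auto simp: xs is_cycle_def)
    moreover have w: "walk E (ps @ v # qs)" using C by (simp add: xs is_cycle_def)
    then have "walk E (v # qs)" by (cases "ps = []") (auto simp: walk_append)
    moreover have "ps \<noteq> [] \<Longrightarrow> walk E ps" using w by (auto simp: walk_append)
    moreover have "qs \<noteq> [] \<Longrightarrow> walk E qs" using \<open>walk E (v # qs)\<close> by (auto simp: walk_Cons)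
    moreover have "ps \<noteq> [] \<Longrightarrow> qs \<noteq> [] \<Longrightarrow> E (last qs) (hd ps)"
      using C by (simp add: xs is_cycle_def)
    ultimately show ?thesis by (cases "ps = []"; cases "qs = []") (auto simp: walk_append)
  qed
  ultimately show ?thesis using connected_on_walk[OF \<open>symp E\<close>] by metis
qed

lemma two_cycles_nonsep:
  assumes "symp E" and C: "is_cycle E xs" "is_cycle E ys"
    and "u \<noteq> w" "{u, w} \<subseteq> set xs \<inter> set ys"
  shows "nonsep_set E (set xs \<union> set ys)"
proof -
  have "3 \<le> card (set xs)" using C by (simp add: is_cycle_def distinct_card)
  then have "2 \<le> card (set xs \<union> set ys)"
    using card_mono[of "set xs \<union> set ys" "set xs"] by simp
  moreover have "connected_on E (set xs \<union> set ys)"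
    using assms by (intro connected_on_Un[of E _ _ u] connected_on_walk) (auto simp: is_cycle_def)
  moreover have "connected_on E (set xs \<union> set ys - {v})" for v
  proof -
    obtain t where "t \<in> set xs - {v}" "t \<in> set ys - {v}" using assms by blast
    then have "connected_on E ((set xs - {v}) \<union> (set ys - {v}))"
      by (intro connected_on_Un connected_on_cycle_minus \<open>symp E\<close> C)
    then show ?thesis by (simp add: Un_Diff)
  qed
  ultimately show ?thesis by (simp add: nonsep_set_def)
qed

lemma simple_graph_symp: "simple_graph V E \<Longrightarrow> symp E"
  unfolding simple_graph_def by (simp add: sympI)

lemma nonsep_set_in_block:
  assumes "finite V" "S \<subseteq> V" "nonsep_set E S"
  obtains B where "is_block V E B" "S \<subseteq> B"
proof -
  let ?A = "{B. S \<subseteq> B \<and> B \<subseteq> V \<and> nonsep_set E B}"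
  have "finite ?A" by (rule finite_subset[of _ "Pow V"]) (auto simp: \<open>finite V\<close>)
  moreover have "S \<in> ?A" using assms by simp
  ultimately obtain B where B: "B \<in> ?A" and max: "\<forall>B'\<in>?A. B \<subseteq> B' \<longrightarrow> B = B'"
    using finite_has_maximal[of ?A] by blast
  have "is_block V E B"
    unfolding is_block_def
  proof (intro conjI allI impI notI)
    fix B' assume B': "B \<subset> B' \<and> B' \<subseteq> V" "nonsep_set E B'"
    then have "B' \<in> ?A" using B by auto
    then show False using max B' by blast
  qed (use B in simp_all)
  then show ?thesis using B that by blast
qed

definition nonsep_degree_le_2 :: "'a set \<Rightarrow> ('a \<Rightarrow> 'a \<Rightarrow> bool) \<Rightarrow> bool" where
  "nonsep_degree_le_2 V E \<longleftrightarrow> (\<forall>S \<subseteq> V. nonsep_set E S \<longrightarrow> (\<forall>v\<in>S. card {u\<in>S. E v u} \<le> 2))"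

lemma cactus_nonsep_degree_le_2:
  assumes "cactus V E"
  shows "nonsep_degree_le_2 V E"
  unfolding nonsep_degree_le_2_def
proof (intro allI impI ballI)
  fix S v assume S: "S \<subseteq> V" "nonsep_set E S" and "v \<in> S"
  have "finite V" "\<not> E v v" using assms by (auto simp: cactus_def simple_graph_def)
  obtain B where B: "is_block V E B" "S \<subseteq> B"
    using nonsep_set_in_block[OF \<open>finite V\<close> S] .
  have "finite B" using B \<open>finite V\<close> by (auto simp: is_block_def nonsep_set_def)
  have "v \<in> B" using B \<open>v \<in> S\<close> by blast
  have "is_cycle_graph_on E B \<or> is_K2_on E B" using assms B by (simp add: cactus_def)
  then have "card {u\<in>B. E v u} \<le> 2"
  proof
    assume "is_K2_on E B"
    then have "card (B - {v}) = 1" using \<open>v \<in> B\<close> by (simp add: is_K2_on_def)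
    moreover have "{u\<in>B. E v u} \<subseteq> B - {v}" using \<open>\<not> E v v\<close> by auto
    ultimately show ?thesis using \<open>finite B\<close> card_mono[of "B - {v}" "{u\<in>B. E v u}"] by simp
  qed (use \<open>v \<in> B\<close> in \<open>simp add: is_cycle_graph_on_def\<close>)
  moreover have "card {u\<in>S. E v u} \<le> card {u\<in>B. E v u}"
    using B \<open>finite B\<close> by (intro card_mono) auto
  ultimately show "card {u\<in>S. E v u} \<le> 2" by linarith
qed

lemma two_cycles_no_degree_3:
  assumes "nonsep_degree_le_2 V E" "symp E"
    and C: "is_cycle E xs" "is_cycle E ys" "set xs \<subseteq> V" "set ys \<subseteq> V"
    and uw: "u \<noteq> w" "{u, w} \<subseteq> set xs \<inter> set ys"
    and "distinct [p, q, r]" "{z, p, q, r} \<subseteq> set xs \<union> set ys" "E z p" "E z q" "E z r"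
  shows False
proof -
  let ?S = "set xs \<union> set ys"
  have "nonsep_set E ?S" using two_cycles_nonsep[OF \<open>symp E\<close> C(1,2) uw] .
  moreover have "?S \<subseteq> V" "z \<in> ?S" using assms by auto
  ultimately have "card {t\<in>?S. E z t} \<le> 2"
    using assms(1) unfolding nonsep_degree_le_2_def by blast
  moreover have "{p, q, r} \<subseteq> {t\<in>?S. E z t}" using assms by auto
  then have "card {p, q, r} \<le> card {t\<in>?S. E z t}" by (intro card_mono) auto
  ultimately show False using \<open>distinct [p, q, r]\<close> by simp
qed

definition delete_vertices :: "('a \<Rightarrow> 'a \<Rightarrow> bool) \<Rightarrow> 'a set \<Rightarrow> 'a \<Rightarrow> 'a \<Rightarrow> bool" where
  "delete_vertices E X x y \<longleftrightarrow> E x y \<and> x \<notin> X \<and> y \<notin> X"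

lemma simple_graph_delete_vertices: "simple_graph V E \<Longrightarrow> simple_graph (V - X) (delete_vertices E X)"
  unfolding simple_graph_def delete_vertices_def by auto

lemma girth_at_least_delete_vertices: "girth_at_least E g \<Longrightarrow> girth_at_least (delete_vertices E X) g"
  unfolding girth_at_least_def has_cycle_of_length_def delete_vertices_def
  by (metis (mono_tags, lifting) walk_mono)

lemma nonsep_degree_le_2_delete_vertices:
  assumes "nonsep_degree_le_2 V E"
  shows "nonsep_degree_le_2 (V - X) (delete_vertices E X)"
  unfolding nonsep_degree_le_2_def
proof (intro allI impI ballI)
  fix S v assume S: "S \<subseteq> V - X" and "nonsep_set (delete_vertices E X) S" and "v \<in> S"
  then have "nonsep_set E S"
    unfolding nonsep_set_def using connected_on_mono[of "delete_vertices E X" _ E]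
    by (auto simp: delete_vertices_def)
  then have "card {u\<in>S. E v u} \<le> 2" using assms S \<open>v \<in> S\<close> by (auto simp: nonsep_degree_le_2_def)
  moreover have "{u\<in>S. delete_vertices E X v u} = {u\<in>S. E v u}"
    using S \<open>v \<in> S\<close> by (auto simp: delete_vertices_def)
  ultimately show "card {u\<in>S. delete_vertices E X v u} \<le> 2" by simp
qed

section \<open>Longest paths end in threads\<close>

definition segment :: "'a list \<Rightarrow> nat \<Rightarrow> nat \<Rightarrow> 'a list" where
  "segment xs i k = drop i (take (Suc k) xs)"

lemma length_segment: "k < length xs \<Longrightarrow> length (segment xs i k) = Suc k - i"
  by (simp add: segment_def)

lemma nth_segment: "k < length xs \<Longrightarrow> i + t \<le> k \<Longrightarrow> segment xs i k ! t = xs ! (i + t)"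
  by (simp add: segment_def)

lemma hd_segment: "k < length xs \<Longrightarrow> i \<le> k \<Longrightarrow> hd (segment xs i k) = xs ! i"
  by (simp add: segment_def hd_drop_conv_nth)

lemma last_segment: "k < length xs \<Longrightarrow> i \<le> k \<Longrightarrow> last (segment xs i k) = xs ! k"
  by (simp add: segment_def last_conv_nth)

lemma nth_in_segment: "k < length xs \<Longrightarrow> i \<le> m \<Longrightarrow> m \<le> k \<Longrightarrow> xs ! m \<in> set (segment xs i k)"
  using nth_segment[of k xs i "m - i"] length_segment[of k xs i] nth_mem[of "m - i" "segment xs i k"]
  by simp

lemma set_segment_subset: "set (segment xs i k) \<subseteq> set xs"
  unfolding segment_def by (meson set_drop_subset set_take_subset order_trans)

lemma distinct_segment: "distinct xs \<Longrightarrow> distinct (segment xs i k)"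
  by (simp add: segment_def)

lemma walk_segment: "walk E xs \<Longrightarrow> k < length xs \<Longrightarrow> i \<le> k \<Longrightarrow> walk E (segment xs i k)"
  unfolding segment_def by (intro walk_drop walk_take) auto

definition path_in :: "'a set \<Rightarrow> ('a \<Rightarrow> 'a \<Rightarrow> bool) \<Rightarrow> 'a list \<Rightarrow> bool" where
  "path_in V E xs \<longleftrightarrow> walk E xs \<and> distinct xs \<and> set xs \<subseteq> V"

lemma is_cycle_segment:
  assumes "path_in V E xs" "k < length xs" "i + 2 \<le> k" "E (xs ! k) (xs ! i)"
  shows "is_cycle E (segment xs i k)"
  unfolding is_cycle_def
proof (intro conjI)
  show "3 \<le> length (segment xs i k)" using assms(2,3) by (simp add: length_segment)
  show "distinct (segment xs i k)" "walk E (segment xs i k)"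
    using assms by (auto simp: path_in_def distinct_segment walk_segment)
  show "E (last (segment xs i k)) (hd (segment xs i k))"
    using assms by (simp add: hd_segment last_segment)
qed

lemma is_cycle_segment_append:
  assumes "path_in V E xs" "k < length xs" "i < k"
    and ws: "path_in V E ws" "set ws \<inter> set xs = {}" "E (xs ! k) (hd ws)" "E (last ws) (xs ! i)"
  shows "is_cycle E (segment xs i k @ ws)"
  unfolding is_cycle_def
proof (intro conjI)
  have "ws \<noteq> []" using ws by (auto simp: path_in_def)
  then show "3 \<le> length (segment xs i k @ ws)"
    using assms(2,3) by (cases ws) (auto simp: length_segment)
  have "segment xs i k \<noteq> []" using assms(2,3) length_segment[of k xs i] by auto
  then show "walk E (segment xs i k @ ws)" "E (last (segment xs i k @ ws)) (hd (segment xs i k @ ws))"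
    using assms \<open>ws \<noteq> []\<close> by (auto simp: path_in_def walk_append walk_segment hd_segment last_segment)
  show "distinct (segment xs i k @ ws)"
    using assms set_segment_subset[of xs i k] by (auto simp: path_in_def distinct_segment)
qed

lemma longest_path_exists:
  assumes "finite V" "v \<in> V"
  obtains xs where "path_in V E xs" "\<And>ys. path_in V E ys \<Longrightarrow> length ys \<le> length xs"
proof -
  have "length ys < Suc (card V)" if "path_in V E ys" for ys
  proof -
    have "length ys = card (set ys)" using that by (simp add: path_in_def distinct_card)
    also have "\<dots> \<le> card V" using that \<open>finite V\<close> by (simp add: path_in_def card_mono)
    finally show ?thesis by simp
  qed
  moreover have "path_in V E [v]" using assms by (simp add: path_in_def)
  ultimately show ?thesis
    using that ex_has_greatest_nat[of "path_in V E" "[v]" length "Suc (card V)"] by blast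
qed

text \<open>The end vertices a and b may coincide (in a 4-cycle).\<close>

definition thread :: "('a \<Rightarrow> 'a \<Rightarrow> bool) \<Rightarrow> 'a \<Rightarrow> 'a \<Rightarrow> 'a \<Rightarrow> 'a \<Rightarrow> 'a \<Rightarrow> bool" where
  "thread E a x1 x2 x3 b \<longleftrightarrow> distinct [x1, x2, x3] \<and> a \<notin> {x1, x2, x3} \<and> b \<notin> {x1, x2, x3} \<and>
     (\<forall>u. E x1 u \<longleftrightarrow> u = a \<or> u = x2) \<and> (\<forall>u. E x2 u \<longleftrightarrow> u = x1 \<or> u = x3) \<and>
     (\<forall>u. E x3 u \<longleftrightarrow> u = x2 \<or> u = b)"

locale longest_path =
  fixes V :: "'a set" and E :: "'a \<Rightarrow> 'a \<Rightarrow> bool" and xs :: "'a list"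
  assumes simple: "simple_graph V E"
    and nonsep: "nonsep_degree_le_2 V E"
    and girth: "girth_at_least E 4"
    and min_degree: "\<And>v. v \<in> V \<Longrightarrow> \<exists>u w. u \<noteq> w \<and> E v u \<and> E v w"
    and path: "path_in V E xs"
    and longest: "\<And>ys. path_in V E ys \<Longrightarrow> length ys \<le> length xs"
begin

lemma edge_sym: "E u v \<Longrightarrow> E v u"
  using simple by (simp add: simple_graph_def)

lemma edge_irrefl: "\<not> E v v"
  using simple by (simp add: simple_graph_def)

lemma edge_in_V: "E u v \<Longrightarrow> u \<in> V" "E u v \<Longrightarrow> v \<in> V"
  using simple by (auto simp: simple_graph_def)

lemma path_nonempty: "xs \<noteq> []"
  using path by (auto simp: path_in_def)

lemma nth_in_V: "i < length xs \<Longrightarrow> xs ! i \<in> V"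
  using path by (auto simp: path_in_def)

lemma other_nbr: "v \<in> V \<Longrightarrow> \<exists>u. E v u \<and> u \<noteq> w"
  using min_degree by metis

lemma nth_eq_iff: "i < length xs \<Longrightarrow> k < length xs \<Longrightarrow> xs ! i = xs ! k \<longleftrightarrow> i = k"
  using path by (simp add: path_in_def nth_eq_iff_index_eq)

lemma edge_nth: "Suc i < length xs \<Longrightarrow> E (xs ! i) (xs ! Suc i)"
  using path by (simp add: path_in_def walk_nth)

lemma off_path_length_le:
  assumes ws: "path_in V E ws" "set ws \<inter> set xs = {}" and i: "i < length xs" "E (last ws) (xs ! i)"
  shows "length ws \<le> i"
proof -
  have "ws \<noteq> []" using ws by (auto simp: path_in_def)
  moreover have "walk E (drop i xs)" "hd (drop i xs) = xs ! i"
    using path i by (auto simp: path_in_def walk_drop hd_drop_conv_nth)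
  ultimately have "path_in V E (ws @ drop i xs)"
    using path ws i set_drop_subset[of i xs] by (auto simp: path_in_def walk_append)
  then show ?thesis using longest[of "ws @ drop i xs"] i by simp
qed

lemma nbr_first_in_path:
  assumes "E (xs ! 0) y"
  shows "y \<in> set xs"
proof (rule ccontr)
  assume "y \<notin> set xs"
  then show False
    using off_path_length_le[of "[y]" 0] assms edge_sym edge_in_V path_nonempty
    by (auto simp: path_in_def)
qed

definition last_nbr :: nat where
  "last_nbr = Max {k. k < length xs \<and> E (xs ! 0) (xs ! k)}"

lemma le_last_nbr: "k < length xs \<Longrightarrow> E (xs ! 0) (xs ! k) \<Longrightarrow> k \<le> last_nbr"
  unfolding last_nbr_def by (rule Max_ge) auto

lemma last_nbr: "last_nbr < length xs" "E (xs ! 0) (xs ! last_nbr)"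
proof -
  have "xs ! 0 \<in> V" using nth_in_V path_nonempty by simp
  then obtain u where "E (xs ! 0) u" using min_degree by blast
  then obtain k where "k < length xs" "E (xs ! 0) (xs ! k)"
    using nbr_first_in_path by (metis in_set_conv_nth)
  then have "last_nbr \<in> {k. k < length xs \<and> E (xs ! 0) (xs ! k)}"
    unfolding last_nbr_def by (intro Max_in) auto
  then show "last_nbr < length xs" "E (xs ! 0) (xs ! last_nbr)" by auto
qed

lemma three_le_last_nbr: "3 \<le> last_nbr"
proof -
  have "xs ! 0 \<in> V" using nth_in_V path_nonempty by simp
  then obtain u w where "u \<noteq> w" "E (xs ! 0) u" "E (xs ! 0) w" using min_degree by blast
  then obtain ku kw where "ku < length xs" "kw < length xs" "ku \<noteq> kw"
      "E (xs ! 0) (xs ! ku)" "E (xs ! 0) (xs ! kw)"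
    using nbr_first_in_path by (metis in_set_conv_nth)
  moreover have "ku \<noteq> 0" "kw \<noteq> 0" using calculation edge_irrefl by metis+
  moreover have "ku \<le> last_nbr" "kw \<le> last_nbr" using calculation le_last_nbr by blast+
  ultimately have "2 \<le> last_nbr" by linarith
  moreover have "last_nbr \<noteq> 2"
  proof
    assume "last_nbr = 2"
    then have "E (xs ! 0) (xs ! 1)" "E (xs ! 1) (xs ! 2)" "E (xs ! 2) (xs ! 0)"
      using last_nbr edge_nth[of 0] edge_nth[of 1] edge_sym by (auto simp: numeral_2_eq_2)
    moreover have "distinct [xs ! 0, xs ! 1, xs ! 2]"
      using last_nbr(1) \<open>last_nbr = 2\<close> nth_eq_iff[of 0 1] nth_eq_iff[of 0 2] nth_eq_iff[of 1 2]
      by (auto simp: path_nonempty)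
    ultimately show False using girth_4_no_triangle[OF girth] by blast
  qed
  ultimately show ?thesis by simp
qed

abbreviation first_cycle :: "'a list" where
  "first_cycle \<equiv> segment xs 0 last_nbr"

lemma is_cycle_first_cycle: "is_cycle E first_cycle"
  using path last_nbr three_le_last_nbr edge_sym by (intro is_cycle_segment) auto

lemma set_segment_in_V: "set (segment xs i k) \<subseteq> V"
  using path set_segment_subset by (fastforce simp: path_in_def)

lemma nth_in_first_cycle: "m \<le> last_nbr \<Longrightarrow> xs ! m \<in> set first_cycle"
  using last_nbr(1) by (simp add: nth_in_segment)

lemma no_third_nbr:
  assumes "{z, p, q} \<subseteq> set first_cycle" "distinct [p, q, y]" "E z p" "E z q" "E z y"
    and "is_cycle E ys" "set ys \<subseteq> V" "{z, p, y} \<subseteq> set ys"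
  shows False
proof -
  have "symp E" using edge_sym by (simp add: sympI)
  moreover have "set first_cycle \<subseteq> V" by (rule set_segment_in_V)
  moreover have "z \<noteq> p" using \<open>E z p\<close> edge_irrefl by auto
  ultimately show False
    using two_cycles_no_degree_3[OF nonsep _ is_cycle_first_cycle \<open>is_cycle E ys\<close>,
        where u = z and w = p and z = z and p = p and q = q and r = y]
      assms by auto
qed

lemma first_nbrs:
  assumes "E (xs ! 0) y"
  shows "y = xs ! 1 \<or> y = xs ! last_nbr"
proof (rule ccontr)
  assume ny: "\<not> ?thesis"
  obtain k where k: "k < length xs" "y = xs ! k"
    using nbr_first_in_path[OF assms] by (metis in_set_conv_nth)
  have "k \<noteq> 0" using assms k edge_irrefl by metis
  moreover have "k \<noteq> 1" "k \<noteq> last_nbr" using k ny by auto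
  moreover have "k \<le> last_nbr" using le_last_nbr k assms by simp
  ultimately have "2 \<le> k" "k < last_nbr" by auto
  have "is_cycle E (segment xs 0 k)"
    using path k \<open>2 \<le> k\<close> assms edge_sym by (intro is_cycle_segment) auto
  moreover have "{xs ! 0, xs ! 1, y} \<subseteq> set (segment xs 0 k)"
    using k \<open>2 \<le> k\<close> nth_in_segment[of k xs 0] by auto
  moreover have "{xs ! 0, xs ! 1, xs ! last_nbr} \<subseteq> set first_cycle"
    using three_le_last_nbr nth_in_first_cycle by auto
  moreover have "distinct [xs ! 1, xs ! last_nbr, y]"
    using k ny \<open>k < last_nbr\<close> last_nbr(1) \<open>2 \<le> k\<close> by (auto simp: nth_eq_iff path_nonempty)
  moreover have "E (xs ! 0) (xs ! 1)" using edge_nth[of 0] three_le_last_nbr last_nbr(1) by simp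
  ultimately show False
    using no_third_nbr[of "xs ! 0" "xs ! 1" "xs ! last_nbr" y] set_segment_in_V assms last_nbr(2)
    by blast
qed

lemma no_cycle_through_extra_nbr:
  assumes i: "0 < i" "i < last_nbr" and y: "E (xs ! i) y" "y \<noteq> xs ! (i - 1)" "y \<noteq> xs ! Suc i"
    and ys: "is_cycle E ys" "set ys \<subseteq> V" "{xs ! i, y} \<subseteq> set ys"
      "xs ! (i - 1) \<in> set ys \<or> xs ! Suc i \<in> set ys"
  shows False
proof -
  have "Suc i < length xs" using i last_nbr(1) by simp
  then have nbrs: "E (xs ! i) (xs ! (i - 1))" "E (xs ! i) (xs ! Suc i)"
    using edge_nth[of "i - 1"] edge_nth[of i] edge_sym i by auto
  have "distinct [xs ! (i - 1), xs ! Suc i, y]" using y \<open>Suc i < length xs\<close> by (auto simp: nth_eq_iff)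
  moreover have "{xs ! i, xs ! (i - 1), xs ! Suc i} \<subseteq> set first_cycle"
    using i nth_in_first_cycle by auto
  ultimately show False
    using ys(4) no_third_nbr[of "xs ! i" "xs ! (i - 1)" "xs ! Suc i" y ys]
      no_third_nbr[of "xs ! i" "xs ! Suc i" "xs ! (i - 1)" y ys] nbrs y ys by auto
qed

lemma inner_nbr_on_path:
  assumes i: "0 < i" "i < last_nbr" and "k < length xs" "E (xs ! i) (xs ! k)"
  shows "k = i - 1 \<or> k = Suc i"
proof (rule ccontr)
  assume k: "\<not> ?thesis"
  have "k \<noteq> i" using assms(4) edge_irrefl by auto
  have "Suc i < length xs" using i last_nbr(1) by simp
  then have y: "xs ! k \<noteq> xs ! (i - 1)" "xs ! k \<noteq> xs ! Suc i" using k assms(3) by (auto simp: nth_eq_iff)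
  show False
  proof (cases "k < i")
    case True
    then have "is_cycle E (segment xs k i)"
      using path k \<open>Suc i < length xs\<close> assms(4) by (intro is_cycle_segment) auto
    then show False
    proof (rule no_cycle_through_extra_nbr[OF i assms(4) y _ set_segment_in_V])
      show "{xs ! i, xs ! k} \<subseteq> set (segment xs k i)"
        "xs ! (i - 1) \<in> set (segment xs k i) \<or> xs ! Suc i \<in> set (segment xs k i)"
        using True \<open>Suc i < length xs\<close> nth_in_segment[of i xs k] by auto
    qed
  next
    case False
    then have "is_cycle E (segment xs i k)"
      using path k \<open>k \<noteq> i\<close> assms edge_sym by (intro is_cycle_segment) auto
    then show False
    proof (rule no_cycle_through_extra_nbr[OF i assms(4) y _ set_segment_in_V])
      show "{xs ! i, xs ! k} \<subseteq> set (segment xs i k)"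
        "xs ! (i - 1) \<in> set (segment xs i k) \<or> xs ! Suc i \<in> set (segment xs i k)"
        using False \<open>k \<noteq> i\<close> assms(3) nth_in_segment[of k xs i] by auto
    qed
  qed
qed

lemma no_detour:
  assumes i: "0 < i" "i < last_nbr" and "k < length xs" "k \<noteq> i"
    and ws: "path_in V E ws" "set ws \<inter> set xs = {}" "E (xs ! i) (hd ws)" "E (last ws) (xs ! k)"
  shows False
proof -
  have "ws \<noteq> []" using ws by (auto simp: path_in_def)
  then have "hd ws \<in> set ws" by simp
  have "Suc i < length xs" using i last_nbr(1) by simp
  then have y: "hd ws \<noteq> xs ! (i - 1)" "hd ws \<noteq> xs ! Suc i" using ws(2) \<open>hd ws \<in> set ws\<close> by auto
  show False
  proof (cases "k < i")
    case True
    then have "is_cycle E (segment xs k i @ ws)"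
      using path \<open>Suc i < length xs\<close> ws by (intro is_cycle_segment_append) auto
    then show False
    proof (rule no_cycle_through_extra_nbr[OF i ws(3) y])
      show "set (segment xs k i @ ws) \<subseteq> V" using set_segment_in_V ws(1) by (auto simp: path_in_def)
      show "{xs ! i, hd ws} \<subseteq> set (segment xs k i @ ws)"
        "xs ! (i - 1) \<in> set (segment xs k i @ ws) \<or> xs ! Suc i \<in> set (segment xs k i @ ws)"
        using True \<open>Suc i < length xs\<close> \<open>hd ws \<in> set ws\<close> nth_in_segment[of i xs k] by auto
    qed
  next
    case False
    have "path_in V E (rev ws)"
      using ws walk_rev[of E ws] edge_sym by (auto simp: path_in_def sympI)
    then have "is_cycle E (segment xs i k @ rev ws)"
      using path False \<open>k \<noteq> i\<close> assms edge_sym \<open>ws \<noteq> []\<close>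
      by (intro is_cycle_segment_append) (auto simp: hd_rev last_rev)
    then show False
    proof (rule no_cycle_through_extra_nbr[OF i ws(3) y])
      show "set (segment xs i k @ rev ws) \<subseteq> V" using set_segment_in_V ws(1) by (auto simp: path_in_def)
      show "{xs ! i, hd ws} \<subseteq> set (segment xs i k @ rev ws)"
        "xs ! (i - 1) \<in> set (segment xs i k @ rev ws) \<or> xs ! Suc i \<in> set (segment xs i k @ rev ws)"
        using False \<open>k \<noteq> i\<close> assms(3) \<open>hd ws \<in> set ws\<close> nth_in_segment[of k xs i] by auto
    qed
  qed
qed

lemma inner_nbrs:
  assumes "0 < i" "i < 3" and y: "E (xs ! i) y"
  shows "y = xs ! (i - 1) \<or> y = xs ! Suc i"
proof (cases "y \<in> set xs")
  case True
  moreover have i: "i < last_nbr" using assms three_le_last_nbr by simp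
  ultimately show ?thesis using inner_nbr_on_path[OF \<open>0 < i\<close> i] y by (metis in_set_conv_nth)
next
  case y_off: False
  have i: "i < last_nbr" using assms three_le_last_nbr by simp
  obtain y' where y': "E y y'" "y' \<noteq> xs ! i" using other_nbr edge_in_V(2)[OF y] by blast
  have "y \<noteq> y'" using y' edge_irrefl by auto
  show ?thesis
  proof (cases "y' \<in> set xs")
    case True
    then obtain k where "k < length xs" "y' = xs ! k" by (metis in_set_conv_nth)
    then show ?thesis
      using no_detour[OF \<open>0 < i\<close> i, of k "[y]"] y y' y_off edge_in_V by (auto simp: path_in_def)
  next
    case y'_off: False
    obtain y'' where y'': "E y' y''" "y'' \<noteq> y" using other_nbr edge_in_V(2)[OF y'(1)] by blast
    have "y'' \<noteq> xs ! i"
    proof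
      assume "y'' = xs ! i"
      moreover have "distinct [xs ! i, y, y']"
        using y_off y'_off \<open>y \<noteq> y'\<close> i last_nbr(1) by auto
      ultimately show False using girth_4_no_triangle[OF girth y y'(1)] y'' by simp
    qed
    show ?thesis
    proof (cases "y'' \<in> set xs")
      case True
      then obtain k where "k < length xs" "y'' = xs ! k" by (metis in_set_conv_nth)
      then show ?thesis
        using no_detour[OF \<open>0 < i\<close> i, of k "[y, y']"] y y' y'' y_off y'_off \<open>y \<noteq> y'\<close>
          \<open>y'' \<noteq> xs ! i\<close> edge_in_V by (auto simp: path_in_def)
    next
      case False
      have "path_in V E [y'', y', y]"
        using y' y'' y_off y'_off False \<open>y \<noteq> y'\<close> edge_sym edge_irrefl edge_in_V
        by (auto simp: path_in_def)
      then show ?thesis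
        using off_path_length_le[of "[y'', y', y]" i] \<open>i < 3\<close> i last_nbr(1) y y_off y'_off False
          edge_sym by auto
    qed
  qed
qed

lemma thread: "thread E (xs ! last_nbr) (xs ! 0) (xs ! 1) (xs ! 2) (xs ! 3)"
  unfolding thread_def
proof (intro conjI allI)
  have len: "3 < length xs" "3 \<le> last_nbr" "last_nbr < length xs"
    using three_le_last_nbr last_nbr(1) by auto
  have edges: "E (xs ! 0) (xs ! 1)" "E (xs ! 1) (xs ! 2)" "E (xs ! 2) (xs ! 3)"
    using edge_nth[of 0] edge_nth[of 1] edge_nth[of 2] len by (simp_all add: numeral_eq_Suc)
  have "distinct [xs ! 0, xs ! 1, xs ! 2, xs ! 3]" "xs ! last_nbr \<notin> {xs ! 0, xs ! 1, xs ! 2}"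
    using len by (auto simp: nth_eq_iff path_nonempty)
  then show "distinct [xs ! 0, xs ! 1, xs ! 2]" "xs ! last_nbr \<notin> {xs ! 0, xs ! 1, xs ! 2}"
    "xs ! 3 \<notin> {xs ! 0, xs ! 1, xs ! 2}" by auto
  fix u
  show "E (xs ! 0) u \<longleftrightarrow> u = xs ! last_nbr \<or> u = xs ! 1"
    using first_nbrs[of u] edges(1) last_nbr(2) by blast
  show "E (xs ! 1) u \<longleftrightarrow> u = xs ! 0 \<or> u = xs ! 2"
    using inner_nbrs[of 1 u] edges edge_sym by (auto simp: numeral_eq_Suc)
  show "E (xs ! 2) u \<longleftrightarrow> u = xs ! 1 \<or> u = xs ! 3"
    using inner_nbrs[of 2 u] edges edge_sym by (auto simp: numeral_eq_Suc)
qed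

end

lemma min_degree_2_thread:
  assumes "simple_graph V E" "nonsep_degree_le_2 V E" "girth_at_least E 4"
    and "V \<noteq> {}" "\<And>v. v \<in> V \<Longrightarrow> \<exists>u w. u \<noteq> w \<and> E v u \<and> E v w"
  obtains a x1 x2 x3 b where "thread E a x1 x2 x3 b"
proof -
  obtain xs where "path_in V E xs" "\<And>ys. path_in V E ys \<Longrightarrow> length ys \<le> length xs"
    using longest_path_exists assms(1,4) by (metis equals0I simple_graph_def)
  then interpret longest_path V E xs
    using assms by unfold_locales auto
  show ?thesis using thread that by blast
qed

section \<open>(2,1)-colorings\<close>

lemma dist_le_2_iff: "dist_le E 2 p q \<longleftrightarrow> p = q \<or> E p q \<or> (\<exists>z. E p z \<and> E z q)"
proof
  assume "dist_le E 2 p q"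
  then obtain xs where "walk E xs" "hd xs = p" "last xs = q" "length xs \<le> 3"
    by (auto simp: dist_le_def numeral_eq_Suc)
  then show "p = q \<or> E p q \<or> (\<exists>z. E p z \<and> E z q)"
    by (auto simp: numeral_eq_Suc le_Suc_eq length_Suc_conv)
next
  assume "p = q \<or> E p q \<or> (\<exists>z. E p z \<and> E z q)"
  then obtain xs where "walk E xs" "hd xs = p" "last xs = q" "length xs \<le> 3"
  proof (elim disjE exE conjE)
    fix z assume "E p z" "E z q"
    then show thesis using that[of "[p, z, q]"] by simp
  qed (use that[of "[p]"] that[of "[p, q]"] in auto)
  then show "dist_le E 2 p q" by (auto simp: dist_le_def numeral_eq_Suc)
qed

lemma dist_le_2_sym: "symp E \<Longrightarrow> dist_le E 2 p q \<Longrightarrow> dist_le E 2 q p"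
  unfolding dist_le_2_iff by (blast dest: sympD)

lemma dist_le_2_delete_vertices:
  assumes "symp E" "x \<notin> X" "y \<notin> X" "x \<noteq> y" "dist_le E 2 x y"
    and one_outside: "\<And>z p q. z \<in> X \<Longrightarrow> E z p \<Longrightarrow> E z q \<Longrightarrow> p \<notin> X \<Longrightarrow> q \<notin> X \<Longrightarrow> p = q"
  shows "dist_le (delete_vertices E X) 2 x y"
proof -
  have "E x y \<or> (\<exists>z. E x z \<and> E z y)" using assms(4,5) by (simp add: dist_le_2_iff)
  then show ?thesis
  proof (elim disjE exE conjE)
    fix z assume "E x z" "E z y"
    then have "z \<notin> X" using one_outside[of z x y] assms(1-4) by (auto dest: sympD)
    then show ?thesis using \<open>E x z\<close> \<open>E z y\<close> assms(2,3)
      by (auto simp: dist_le_2_iff delete_vertices_def)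
  qed (use assms(2,3) in \<open>simp add: dist_le_2_iff delete_vertices_def\<close>)
qed

definition coloring_21 :: "'a set \<Rightarrow> ('a \<Rightarrow> 'a \<Rightarrow> bool) \<Rightarrow> ('a \<Rightarrow> nat) \<Rightarrow> bool" where
  "coloring_21 V E c \<longleftrightarrow> (\<forall>v\<in>V. c v < 3) \<and>
     (\<forall>x\<in>V. \<forall>y\<in>V. E x y \<longrightarrow> c x = c y \<longrightarrow> c x = 2) \<and>
     (\<forall>x\<in>V. \<forall>y\<in>V. x \<noteq> y \<longrightarrow> c x = 2 \<longrightarrow> c y = 2 \<longrightarrow> \<not> dist_le E 2 x y)"

lemma ab_colorable_2_1_iff: "ab_colorable V E 2 1 \<longleftrightarrow> (\<exists>c. coloring_21 V E c)"
proof -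
  have "(\<forall>i<2. independent_set E {v\<in>V. c v = i}) \<longleftrightarrow>
      (\<forall>x\<in>V. \<forall>y\<in>V. E x y \<longrightarrow> c x = c y \<longrightarrow> c x = 2)" if "\<forall>v\<in>V. c v < 3" for c :: "'a \<Rightarrow> nat"
  proof
    assume ind: "\<forall>i<2. independent_set E {v\<in>V. c v = i}"
    show "\<forall>x\<in>V. \<forall>y\<in>V. E x y \<longrightarrow> c x = c y \<longrightarrow> c x = 2"
    proof (intro ballI impI)
      fix x y assume "x \<in> V" "y \<in> V" "E x y" "c x = c y"
      moreover have "c x < 2 \<or> c x = 2" using that \<open>x \<in> V\<close> by fastforce
      ultimately show "c x = 2" using ind unfolding independent_set_def by auto
    qed
  qed (auto simp: independent_set_def)
  moreover have "(\<forall>i. 2 \<le> i \<and> i < 2 + 1 \<longrightarrow> two_independent_set E {v\<in>V. c v = i}) \<longleftrightarrow>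
      (\<forall>x\<in>V. \<forall>y\<in>V. x \<noteq> y \<longrightarrow> c x = 2 \<longrightarrow> c y = 2 \<longrightarrow> \<not> dist_le E 2 x y)" for c :: "'a \<Rightarrow> nat"
    unfolding two_independent_set_def by auto
  ultimately show ?thesis unfolding ab_colorable_def coloring_21_def by auto
qed

lemma coloring_21_extend:
  assumes "symp E"
    and c': "coloring_21 (V - X) (delete_vertices E X) c'"
    and agree: "\<And>v. v \<in> V - X \<Longrightarrow> c v = c' v"
    and range: "\<And>v. v \<in> X \<Longrightarrow> c v < 3"
    and proper: "\<And>x y. x \<in> X \<Longrightarrow> E x y \<Longrightarrow> c x = c y \<Longrightarrow> c x = 2"
    and sparse: "\<And>x y. x \<in> X \<Longrightarrow> y \<in> V \<Longrightarrow> x \<noteq> y \<Longrightarrow> c x = 2 \<Longrightarrow> c y = 2 \<Longrightarrow> \<not> dist_le E 2 x y"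
    and one_outside: "\<And>z p q. z \<in> X \<Longrightarrow> E z p \<Longrightarrow> E z q \<Longrightarrow> p \<notin> X \<Longrightarrow> q \<notin> X \<Longrightarrow> p = q"
  shows "coloring_21 V E c"
  unfolding coloring_21_def
proof (intro conjI ballI impI)
  fix v assume "v \<in> V"
  then show "c v < 3" using range agree c' by (cases "v \<in> X") (auto simp: coloring_21_def)
next
  fix x y assume xy: "x \<in> V" "y \<in> V" "E x y" "c x = c y"
  consider "x \<in> X" | "y \<in> X" | "x \<notin> X" "y \<notin> X" by blast
  then show "c x = 2"
  proof cases
    case 2
    then show ?thesis using proper[of y x] xy \<open>symp E\<close> by (auto dest: sympD)
  next
    case 3
    then show ?thesis using c' xy agree by (auto simp: coloring_21_def delete_vertices_def)
  qed (use proper xy in blast)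
next
  fix x y assume xy: "x \<in> V" "y \<in> V" "x \<noteq> y" "c x = 2" "c y = 2"
  consider "x \<in> X" | "y \<in> X" | "x \<notin> X" "y \<notin> X" by blast
  then show "\<not> dist_le E 2 x y"
  proof cases
    case 2
    then show ?thesis using sparse[of y x] xy dist_le_2_sym[OF \<open>symp E\<close>] by auto
  next
    case 3
    show ?thesis
    proof
      assume "dist_le E 2 x y"
      then have "dist_le (delete_vertices E X) 2 x y"
        using dist_le_2_delete_vertices[of E x X y] \<open>symp E\<close> 3 xy one_outside by blast
      then show False using c' xy agree 3 by (auto simp: coloring_21_def)
    qed
  qed (use sparse xy in blast)
qed

lemma coloring_21_extend_low_degree:
  assumes "simple_graph V E" and deg: "\<And>u w. E v u \<Longrightarrow> E v w \<Longrightarrow> u = w"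
    and c': "coloring_21 (V - {v}) (delete_vertices E {v}) c'"
  shows "\<exists>c. coloring_21 V E c"
proof -
  define c where "c = c'(v := if \<exists>u. E v u \<and> c' u = 0 then 1 else 0)"
  have "\<not> E v v" using assms(1) by (simp add: simple_graph_def)
  have "coloring_21 V E c"
  proof (rule coloring_21_extend[OF simple_graph_symp[OF assms(1)] c'])
    fix x y assume "x \<in> {v}" "E x y" "c x = c y"
    then have "x = v" "E v y" "y \<noteq> v" using \<open>\<not> E v v\<close> by auto
    then have cy: "c' y = c v" using \<open>c x = c y\<close> by (simp add: c_def)
    show "c x = 2"
    proof (cases "\<exists>u. E v u \<and> c' u = 0")
      case True
      then have "c' y = 0" using deg \<open>E v y\<close> by blast
      then show ?thesis using True cy by (simp add: c_def)
    next
      case False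
      then have "c' y = 0" using cy by (simp add: c_def)
      then show ?thesis using False \<open>E v y\<close> by blast
    qed
  next
    show "\<And>z p q. z \<in> {v} \<Longrightarrow> E z p \<Longrightarrow> E z q \<Longrightarrow> p \<notin> {v} \<Longrightarrow> q \<notin> {v} \<Longrightarrow> p = q"
      using deg by blast
  qed (simp_all add: c_def split: if_splits)
  then show ?thesis by blast
qed

lemma thread_colors:
  fixes \<alpha> \<beta> :: nat
  obtains t1 t2 t3 where "t1 < 2" "t2 < 3" "t3 < 2" "t1 \<noteq> \<alpha>" "t2 \<noteq> t1" "t2 \<noteq> t3" "t3 \<noteq> \<beta>"
    and "t2 = 2 \<Longrightarrow> \<alpha> < 2 \<and> \<beta> < 2"
proof (cases "\<alpha> < 2 \<and> \<beta> < 2 \<and> \<alpha> \<noteq> \<beta>")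
  case True
  then show ?thesis using that[of \<beta> 2 \<alpha>] by auto
next
  case False
  define \<gamma> :: nat where "\<gamma> = (if \<alpha> = 0 \<or> \<beta> = 0 then 1 else 0)"
  show ?thesis using that[of \<gamma> "1 - \<gamma>" \<gamma>] False by (auto simp: \<gamma>_def)
qed

lemma coloring_21_extend_thread:
  assumes "simple_graph V E" and T: "thread E a x1 x2 x3 b"
    and c': "coloring_21 (V - {x1, x2, x3}) (delete_vertices E {x1, x2, x3}) c'"
  shows "\<exists>c. coloring_21 V E c"
proof -
  let ?X = "{x1, x2, x3}"
  have nbrs: "\<And>u. E x1 u \<longleftrightarrow> u = a \<or> u = x2" "\<And>u. E x2 u \<longleftrightarrow> u = x1 \<or> u = x3"
      "\<And>u. E x3 u \<longleftrightarrow> u = x2 \<or> u = b"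
    and distinct: "distinct [x1, x2, x3]" "a \<notin> ?X" "b \<notin> ?X"
    using T by (auto simp: thread_def)
  obtain t1 t2 t3 where t: "t1 < 2" "t2 < 3" "t3 < 2" "t1 \<noteq> c' a" "t2 \<noteq> t1" "t2 \<noteq> t3" "t3 \<noteq> c' b"
    and t2: "t2 = 2 \<Longrightarrow> c' a < 2 \<and> c' b < 2"
    using thread_colors[of "c' a" "c' b"] by blast
  define c where "c = c'(x1 := t1, x2 := t2, x3 := t3)"
  have c: "c x1 = t1" "c x2 = t2" "c x3 = t3" "c a = c' a" "c b = c' b"
    using distinct by (auto simp: c_def)
  have "coloring_21 V E c"
  proof (rule coloring_21_extend[OF simple_graph_symp[OF assms(1)] c'])
    fix x y assume "x \<in> ?X" "E x y" "c x = c y"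
    then show "c x = 2" using nbrs c t by auto
  next
    fix x y assume "x \<in> ?X" "x \<noteq> y" "c x = 2" "c y = 2"
    then have "x = x2" and ab2: "c' a < 2" "c' b < 2" using c t t2 by auto
    then have "y \<in> {x1, x3, a, b}" if "dist_le E 2 x y"
      using that \<open>x \<noteq> y\<close> nbrs by (auto simp: dist_le_2_iff)
    then show "\<not> dist_le E 2 x y" using \<open>c y = 2\<close> c t ab2 by auto
  next
    show "\<And>z p q. z \<in> ?X \<Longrightarrow> E z p \<Longrightarrow> E z q \<Longrightarrow> p \<notin> ?X \<Longrightarrow> q \<notin> ?X \<Longrightarrow> p = q"
      using nbrs by auto
  qed (use t in \<open>auto simp: c_def\<close>)
  then show ?thesis by blast
qed

lemma coloring_21_exists:
  assumes "simple_graph V E" "nonsep_degree_le_2 V E" "girth_at_least E 4"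
  shows "\<exists>c. coloring_21 V E c"
  using assms
proof (induction "card V" arbitrary: V E rule: less_induct)
  case less
  have IH: "\<exists>c. coloring_21 (V - X) (delete_vertices E X) c" if "X \<subseteq> V" "X \<noteq> {}" for X
  proof (rule less.hyps)
    have "finite V" using less.prems(1) by (simp add: simple_graph_def)
    with that show "card (V - X) < card V" by (intro psubset_card_mono) auto
  qed (use less.prems in \<open>auto intro: simple_graph_delete_vertices
    nonsep_degree_le_2_delete_vertices girth_at_least_delete_vertices\<close>)
  consider "V = {}" | v where "v \<in> V" "\<And>u w. E v u \<Longrightarrow> E v w \<Longrightarrow> u = w"
    | "V \<noteq> {}" "\<And>v. v \<in> V \<Longrightarrow> \<exists>u w. u \<noteq> w \<and> E v u \<and> E v w"
    by blast
  then show ?case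
  proof cases
    case 1
    then show ?thesis by (auto simp: coloring_21_def)
  next
    case 2
    then show ?thesis
      using IH[of "{v}"] coloring_21_extend_low_degree[OF less.prems(1)] by blast
  next
    case 3
    then obtain a x1 x2 x3 b where T: "thread E a x1 x2 x3 b"
      using min_degree_2_thread less.prems by blast
    then have "E x1 x2" "E x2 x3" by (simp_all add: thread_def)
    then have "{x1, x2, x3} \<subseteq> V" using less.prems(1) unfolding simple_graph_def by blast
    then show ?thesis
      using IH[of "{x1, x2, x3}"] coloring_21_extend_thread[OF less.prems(1) T] by blast
  qed
qed

theorem mainTheorem13:
  fixes V :: "'a set" and E :: "'a \<Rightarrow> 'a \<Rightarrow> bool"
  assumes "cactus V E"
    and "girth_at_least E 4"
  shows "ab_colorable V E 2 1"
proof -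
  have "simple_graph V E" using assms(1) by (simp add: cactus_def)
  then show ?thesis
    unfolding ab_colorable_2_1_iff
    using coloring_21_exists cactus_nonsep_degree_le_2[OF assms(1)] assms(2) by blast
qed

end
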